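(* If $H\in\mathcal{H}_-$, then $H_{L_H^{**}}(x,y)\le -H_{L_H^{**}}(y,x)$ for all $x,y\in\bar\Omega$; that is, the restriction of $H_{L_H^{**}}$ to $\bar\Omega\times\bar\Omega$ belongs to $\mathcal{H}_-$.
   Context: $\Omega\subset\mathbb{R}^N$ is a bounded domain with $\bar\Omega\subset B_R$, the ball of radius $R>0$ centered at the origin. $\mathcal{H}_-$ is the set of continuous $H$ on $\bar\Omega\times\bar\Omega$ with $H(x,y)\le -H(y,x)$ for all $x,y$. For such $H$: $L_H(x,p)=\sup_{y\in\bar\Omega}\{\langle y,p\rangle-H(y,x)\}$; $L_H^*(q,y)=\sup_{x\in\bar\Omega,\,p\in B_R}\{\langle y,p\rangle+\langle q,x\rangle-L_H(x,p)\}$; $L_H^{**}(y,q)=\sup_{x\in\bar\Omega,\,p\in B_R}\{\langle y,p\rangle+\langle q,x\rangle-L_H^*(p,x)\}$. For a function $L$ on $\mathbb{R}^N\times\mathbb{R}^N$, $H_L(x,y)=\sup_{p\in B_R}\{\langle x,p\rangle-L(y,p)\}$. *)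

theory Defs
  imports "HOL-Analysis.Analysis"
begin

text \<open>Oc plays the role of the closure of Omega; ball 0 R is B_R.\<close>

definition Hminus :: "'a::euclidean_space set \<Rightarrow> ('a \<Rightarrow> 'a \<Rightarrow> real) set" where
  "Hminus Oc = {H. continuous_on (Oc \<times> Oc) (\<lambda>(x, y). H x y) \<and>
                  (\<forall>x\<in>Oc. \<forall>y\<in>Oc. H x y \<le> - H y x)}"

definition L_H :: "'a::euclidean_space set \<Rightarrow> ('a \<Rightarrow> 'a \<Rightarrow> real) \<Rightarrow> 'a \<Rightarrow> 'a \<Rightarrow> real" where
  "L_H Oc H x p = (SUP y\<in>Oc. inner y p - H y x)"

definition L_H_star :: "'a::euclidean_space set \<Rightarrow> real \<Rightarrow> ('a \<Rightarrow> 'a \<Rightarrow> real) \<Rightarrow> 'a \<Rightarrow> 'a \<Rightarrow> real" where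
  "L_H_star Oc R H q y = (SUP (x, p)\<in>Oc \<times> ball 0 R. inner y p + inner q x - L_H Oc H x p)"

definition L_H_star2 :: "'a::euclidean_space set \<Rightarrow> real \<Rightarrow> ('a \<Rightarrow> 'a \<Rightarrow> real) \<Rightarrow> 'a \<Rightarrow> 'a \<Rightarrow> real" where
  "L_H_star2 Oc R H y q = (SUP (x, p)\<in>Oc \<times> ball 0 R. inner y p + inner q x - L_H_star Oc R H p x)"

definition H_L :: "real \<Rightarrow> ('a::euclidean_space \<Rightarrow> 'a \<Rightarrow> real) \<Rightarrow> 'a \<Rightarrow> 'a \<Rightarrow> real" where
  "H_L R L x y = (SUP p\<in>ball 0 R. inner x p - L y p)"

end

theory Submission
  imports Defs
begin

text \<open>
  Write L = L_H, L* = L_H_star and L** = L_H_star2, all taken over a nonempty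
  set K inside the ball B of radius R, for an H that is bounded and satisfies
  H u v \<le> - H v u on K.
  (1) Adding the two lower bounds L(a,b) \<ge> <x',b> - H(x',a) and L(x',p') \<ge> <a,p'> - H(a,x')
      and using the antisymmetry of H gives the Fenchel-type inequality
      <x',b> + <p',a> - L(a,b) \<le> L(x',p'), i.e. L*(p',x') \<le> L(x',p') on K \<times> B.
  (2) Conjugating once more yields L*(q,z) \<le> L**(z,q), and combining this with the
      defining lower bound of L** gives the coupling inequality
      L**(y,p) + L**(x,q) \<ge> <x,p> + <y,q>   for x in K, any y, and p, q in B.
  (3) For any G with this coupling property, H_G(x,y) \<le> - H_G(y,x) follows directly from
      the definition of H_G as a supremum over B.
  Boundedness of H (needed so that all suprema are finite) comes from continuity on the
  compact set closure Omega; this is the only place where the hypotheses of the theorem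
  on Omega enter; the conclusion in fact holds for x in closure Omega and arbitrary y.
\<close>

lemma H_L_antisym_if_coupling:
  fixes G :: "'a::euclidean_space \<Rightarrow> 'a \<Rightarrow> real"
  assumes R: "R > 0"
    and coupling: "\<And>p q. norm p < R \<Longrightarrow> norm q < R \<Longrightarrow> inner x q + inner y p \<le> G y q + G x p"
  shows "H_L R G x y \<le> - H_L R G y x"
proof -
  have ball_ne: "ball (0::'a) R \<noteq> {}" using R by auto
  have HL_yx: "H_L R G y x \<le> G y q - inner x q" if q: "norm q < R" for q
    unfolding H_L_def
    by (rule cSUP_least[OF ball_ne]) (use coupling[OF _ q] in \<open>fastforce simp: algebra_simps\<close>)
  show ?thesis
    unfolding H_L_def[of R G x y]
    by (rule cSUP_least[OF ball_ne]) (use HL_yx in \<open>fastforce simp: algebra_simps\<close>)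
qed

lemma inner_le_R:
  fixes u v :: "'a::real_inner"
  shows "norm u \<le> R \<Longrightarrow> inner u v \<le> R * norm v"
  by (smt (verit) Cauchy_Schwarz_ineq2 abs_le_D1 mult_right_mono norm_ge_zero)

locale bounded_antisym_hamiltonian =
  fixes K :: "'a::euclidean_space set" and R M :: real and H :: "'a \<Rightarrow> 'a \<Rightarrow> real"
  assumes K_nonempty: "K \<noteq> {}"
    and R_pos: "R > 0"
    and K_in_ball: "K \<subseteq> ball 0 R"
    and H_bounded: "\<And>u v. u \<in> K \<Longrightarrow> v \<in> K \<Longrightarrow> \<bar>H u v\<bar> \<le> M"
    and H_antisym: "\<And>u v. u \<in> K \<Longrightarrow> v \<in> K \<Longrightarrow> H u v \<le> - H v u"
begin

abbreviation "L \<equiv> L_H K H"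
abbreviation "Ls \<equiv> L_H_star K R H"
abbreviation "Lss \<equiv> L_H_star2 K R H"

lemma norm_lt_R: "u \<in> K \<Longrightarrow> norm u < R"
  using K_in_ball by auto

lemma L_H_bdd: "a \<in> K \<Longrightarrow> bdd_above ((\<lambda>u. inner u p - H u a) ` K)"
  by (rule bdd_aboveI2[where M = "R * norm p + M"])
     (use inner_le_R norm_lt_R H_bounded in \<open>smt (verit)\<close>)

lemma L_H_ge: "a \<in> K \<Longrightarrow> u \<in> K \<Longrightarrow> inner u p - H u a \<le> L a p"
  unfolding L_H_def by (rule cSUP_upper[OF _ L_H_bdd])

lemma L_H_zero_le: "a \<in> K \<Longrightarrow> L a 0 \<le> M"
  unfolding L_H_def by (rule cSUP_least[OF K_nonempty]) (use H_bounded in force)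

lemma L_H_fenchel:
  assumes "x' \<in> K" "a \<in> K"
  shows "inner x' b + inner p' a - L a b \<le> L x' p'"
  using L_H_ge[OF assms(2,1), of b] L_H_ge[OF assms, of p'] H_antisym[OF assms]
  by (simp add: inner_commute)

lemma L_H_star_bdd:
  "x' \<in> K \<Longrightarrow> bdd_above ((\<lambda>(a, b). inner x' b + inner p' a - L a b) ` (K \<times> ball 0 R))"
  by (rule bdd_aboveI2[where M = "L x' p'"]) (use L_H_fenchel in auto)

lemma L_H_star_le_L_H: "x' \<in> K \<Longrightarrow> Ls p' x' \<le> L x' p'"
  unfolding L_H_star_def
  by (rule cSUP_least) (use K_nonempty R_pos L_H_fenchel in auto)

text \<open>A uniform lower bound for L*, needed so that the supremum defining L** is finite.\<close>

lemma L_H_star_lower: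
  assumes x': "x' \<in> K" and p': "norm p' < R"
  shows "- R * R - M \<le> Ls p' x'"
proof -
  obtain a where a: "a \<in> K" using K_nonempty by auto
  have "inner x' 0 + inner p' a - L a 0 \<le> Ls p' x'"
    unfolding L_H_star_def
    by (rule cSUP_upper2[OF L_H_star_bdd[OF x'], of "(a, 0)"]) (use a R_pos in auto)
  moreover have "- (R * R) \<le> inner p' a"
    using inner_le_R[of p' R "-a"] p' norm_lt_R[OF a] R_pos
    by (smt (verit) inner_minus_right mult_left_mono norm_minus_cancel)
  ultimately show ?thesis using L_H_zero_le[OF a] by simp
qed

lemma L_H_star2_bdd:
  "bdd_above ((\<lambda>(a, b). inner z b + inner q a - Ls b a) ` (K \<times> ball 0 R))"
proof (rule bdd_aboveI2[where M = "norm z * R + R * norm q + R * R + M"])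
  fix ab :: "'a \<times> 'a" assume "ab \<in> K \<times> ball 0 R"
  then obtain a b where ab: "ab = (a, b)" "a \<in> K" "norm b < R" by auto
  have "inner z b \<le> norm z * R"
    using inner_le_R[of b R z] ab(3) by (simp add: inner_commute mult.commute)
  moreover have "inner q a \<le> R * norm q"
    using inner_le_R[of a R q] norm_lt_R[OF ab(2)] by (simp add: inner_commute)
  ultimately show "(\<lambda>(a, b). inner z b + inner q a - Ls b a) ab \<le> norm z * R + R * norm q + R * R + M"
    using L_H_star_lower[OF ab(2,3)] ab(1) by auto
qed

lemma L_H_star2_ge: "a \<in> K \<Longrightarrow> norm b < R \<Longrightarrow> inner z b + inner q a - Ls b a \<le> Lss z q"
  unfolding L_H_star2_def
  by (rule cSUP_upper2[OF L_H_star2_bdd, of "(a, b)"]) auto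

lemma L_H_star_le_L_H_star2: "Ls q z \<le> Lss z q"
  unfolding L_H_star_def
proof (rule cSUP_least)
  show "K \<times> ball 0 R \<noteq> {}" using K_nonempty R_pos by auto
next
  fix ab :: "'a \<times> 'a" assume "ab \<in> K \<times> ball 0 R"
  then obtain a b where ab: "ab = (a, b)" "a \<in> K" "norm b < R" by auto
  show "(\<lambda>(a, b). inner z b + inner q a - L a b) ab \<le> Lss z q"
    using L_H_star2_ge[OF ab(2,3), of z q] L_H_star_le_L_H[OF ab(2), of b] ab(1) by simp
qed

lemma L_H_star2_coupling:
  assumes "x \<in> K" "norm p < R" "norm q < R"
  shows "inner x p + inner y q \<le> Lss y p + Lss x q"
  using L_H_star2_ge[of x q y p] L_H_star_le_L_H_star2[of q x] assms
  by (simp add: inner_commute)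

end

lemma continuous_on_compact_square_bounded:
  fixes H :: "'a::euclidean_space \<Rightarrow> 'a \<Rightarrow> real"
  assumes "compact K" "continuous_on (K \<times> K) (\<lambda>(x, y). H x y)"
  obtains M where "\<And>u v. u \<in> K \<Longrightarrow> v \<in> K \<Longrightarrow> \<bar>H u v\<bar> \<le> M"
proof -
  have "bounded ((\<lambda>(x, y). H x y) ` (K \<times> K))"
    using assms by (intro compact_imp_bounded compact_continuous_image compact_Times)
  then obtain M where "\<forall>z \<in> (\<lambda>(x, y). H x y) ` (K \<times> K). norm z \<le> M"
    by (auto simp: bounded_iff)
  then have "\<bar>H u v\<bar> \<le> M" if "u \<in> K" "v \<in> K" for u v
    using that by force
  with that show ?thesis by blast
qed

theorem lemma2p4:
  fixes \<Omega> :: "'a::euclidean_space set" and R :: real and H :: "'a \<Rightarrow> 'a \<Rightarrow> real"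
  assumes "open \<Omega>" and "connected \<Omega>" and "\<Omega> \<noteq> {}" and "bounded \<Omega>"
    and "R > 0" and "closure \<Omega> \<subseteq> ball 0 R"
    and "H \<in> Hminus (closure \<Omega>)"
  shows "\<forall>x\<in>closure \<Omega>. \<forall>y\<in>closure \<Omega>.
           H_L R (L_H_star2 (closure \<Omega>) R H) x y \<le> - H_L R (L_H_star2 (closure \<Omega>) R H) y x"
proof (intro ballI)
  fix x y assume x: "x \<in> closure \<Omega>"
  have cont: "continuous_on (closure \<Omega> \<times> closure \<Omega>) (\<lambda>(x, y). H x y)"
    and antisym: "\<And>u v. u \<in> closure \<Omega> \<Longrightarrow> v \<in> closure \<Omega> \<Longrightarrow> H u v \<le> - H v u"
    using assms(7) by (auto simp: Hminus_def)
  obtain M where "\<And>u v. u \<in> closure \<Omega> \<Longrightarrow> v \<in> closure \<Omega> \<Longrightarrow> \<bar>H u v\<bar> \<le> M"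
    using continuous_on_compact_square_bounded[OF compact_closure[THEN iffD2, OF assms(4)] cont]
    by blast
  then interpret bounded_antisym_hamiltonian "closure \<Omega>" R M H
    using assms(3,5,6) antisym by unfold_locales auto
  show "H_L R Lss x y \<le> - H_L R Lss y x"
    using H_L_antisym_if_coupling[OF R_pos] L_H_star2_coupling[OF x] by blast
qed

end
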